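(* Let $\mathcal{A}$ be an attacker, $W$ a world, $m\in\mathbb{N}$, $\Sigma,\Sigma'$ lock sets, $\tau,\tau'$ labeled types and $e,e'$ expressions. If $(e,e',W,\Sigma,\Sigma',m)\in\mathcal{E}^{\mathcal{A}}[\![\tau']\!]$, $\Sigma\approx_{\mathcal{A}}\Sigma'$, $\tau'|_{\Sigma}<:\tau$ and $\tau'|_{\Sigma'}<:\tau$, then $(\mathsf{new}(e,\tau),\mathsf{new}(e',\tau),W,\Sigma,\Sigma',m)\in\mathcal{E}^{\mathcal{A}}[\![(\mathsf{ref}\,\tau)^{\bot}]\!]$.
   Context: **Policies.** Fix a set of actors $a$ and a set of locks $\sigma$. A lock set $\Sigma$ is a set of locks. A clause is a pair $(\Sigma \Rightarrow a)$; a policy $p$ is a set of clauses. $p \sqsubseteq q$ iff for every $(\Sigma_2\Rightarrow a)\in q$ there is $(\Sigma_1\Rightarrow a)\in p$ with $\Sigma_1\subseteq\Sigma_2$. $\bot=\{(\emptyset\Rightarrow a)\mid a \text{ an actor}\}$. Specialization: $p|_\Sigma=\{(\Sigma_1\setminus\Sigma\Rightarrow a)\mid(\Sigma_1\Rightarrow a)\in p\}$. A fixed function $\mathrm{LockPolicy}$ assigns a policy to each lock. **Types.** Raw types $A ::= \mathsf{unit}\mid\mathsf{nat}\mid \tau_1+\tau_2\mid\tau_1\times\tau_2\mid \mathsf{ref}\,\tau\mid \tau_1\xrightarrow{\Sigma,p}\tau_2$; labeled types $\tau ::= A^p$. For $\tau=A^p$: $\tau\sqsubseteq q$ means $p\sqsubseteq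 q$; $\tau|_\Sigma = A^{p|_\Sigma}$. **Subtyping** $<:$: $A^p<:B^{p'}$ if $p\sqsubseteq p'$ and $A<:B$; $\mathsf{unit}<:\mathsf{unit}$; $\mathsf{nat}<:\mathsf{nat}$; $\mathsf{ref}\,\tau<:\mathsf{ref}\,\tau$; $\tau_0\times\tau_2<:\tau_1\times\tau_3$ and $\tau_0+\tau_2<:\tau_1+\tau_3$ if $\tau_0<:\tau_1,\tau_2<:\tau_3$; $\tau_1\xrightarrow{\Sigma,p}\tau_2<:\tau_0\xrightarrow{\Sigma',p'}\tau_3$ if $\tau_0<:\tau_1$, $\tau_2<:\tau_3$, $p'\sqsubseteq p$, $\Sigma\subseteq\Sigma'$. **Syntax.** Expressions: $x\mid ()\mid n\ (n\in\mathbb{N})\mid \lambda x.e\mid (e,e')\mid \mathsf{fst}(e)\mid\mathsf{snd}(e)\mid\mathsf{inl}(e)\mid\mathsf{inr}(e)\mid \mathsf{case}\ e\ \mathsf{of}\ \mathsf{inl}\,x\Rightarrow e'\mid\mathsf{inr}\,y\Rightarrow e''\mid e\,e'\mid \mathsf{new}(e,\tau)\mid\ !e\mid e:=e'\mid \mathsf{open}\ \sigma\ \mathsf{in}\ e\mid\mathsf{opened}\ \sigma\ \mathsf{in}\ e\mid\mathsf{close}\ \sigma\ \mathsf{in}\ e\mid\mathsf{closed}\ \sigma\ \mathsf{in}\ e\mid \mathsf{when}\ \sigma\ \mathsf{then}\ e\ \mathsf{else}\ e'\mid l$ ($l$ ranging over a countably infinite set of locations). Values: $v::=\lambda x.e\mid(v,v')\mid\mathsf{inl}(v)\mid\mathsf{inr}(v)\mid()\mid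 l\mid n$; $\mathcal{V}$ is the set of values. A state $S$ is a finite map from locations to pairs $(v,\tau)$; write $S(l)=v$, $\mathrm{type}(S,l)=\tau$. A state environment $\theta$ is a finite map from locations to labeled types; $\theta'\sqsupseteq\theta$ iff $\theta\subseteq\theta'$ as graphs. **Observations.** $\omega::=\varepsilon\mid \mathsf{wr}_{l,\tau}(v)\mid\mathsf{open}(\sigma)\mid\mathsf{close}(\sigma)\mid\mathsf{unopen}(\sigma)\mid\mathsf{unclose}(\sigma)$. $\mathrm{pol}(\mathsf{wr}_{l,A^p}(v))=p$; the policy of each of the four lock observations on $\sigma$ is $\mathrm{LockPolicy}(\sigma)$; $\mathrm{pol}(\varepsilon)$ is undefined. **Reduction** $e,\Sigma,S\to e',S',\omega,\Sigma'$ ($\Sigma$ = open locks, $\Sigma'$ = active lock set). Congruence rules (the premise step's $S',\omega,\Sigma'$ are propagated unchanged): reduce $e$ inside $\mathsf{new}(e,\tau)$, $!e$, $e:=e'$, $l:=e$, $e\,e'$, $(\lambda x.e)\,e$, $(e,e')$, $(v,e)$, $\mathsf{fst}(e)$, $\mathsf{snd}(e)$, $\mathsf{inl}(e)$, $\mathsf{inr}(e)$, and the scrutinee of $\mathsf{case}$, all with the same open-lock set $\Sigma$. Lock rules: $\mathsf{open}\ \sigma\ \mathsf{in}\ e,\Sigma,S\to \mathsf{opened}\ \sigma\ \mathsf{in}\ e,S,\mathsf{open}(\sigma),\Sigma$; if $e,\Sigma\cup\{\sigma\},S\to e',S',\omega,\Sigma'$ then $\mathsf{opened}\ \sigma\ \mathsf{in}\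 e,\Sigma,S\to\mathsf{opened}\ \sigma\ \mathsf{in}\ e',S',\omega,\Sigma'$; $\mathsf{opened}\ \sigma\ \mathsf{in}\ v,\Sigma,S\to v,S,\mathsf{unopen}(\sigma),\Sigma$; analogously for $\mathsf{close}/\mathsf{closed}$ with $\Sigma\setminus\{\sigma\}$ and observations $\mathsf{close}(\sigma)$, $\mathsf{unclose}(\sigma)$. If $\sigma\in\Sigma$ and $e,\Sigma,S\to e'',S',\omega,\Sigma'$ then $\mathsf{when}\ \sigma\ \mathsf{then}\ e\ \mathsf{else}\ e',\Sigma,S\to\mathsf{when}\ \sigma\ \mathsf{then}\ e''\ \mathsf{else}\ e',S',\omega,\Sigma'$; if $\sigma\notin\Sigma$ and $e',\Sigma,S\to e'',S',\omega,\Sigma'$ then it steps to $\mathsf{when}\ \sigma\ \mathsf{then}\ e\ \mathsf{else}\ e''$; if $\sigma\in\Sigma$, $\mathsf{when}\ \sigma\ \mathsf{then}\ v\ \mathsf{else}\ e'\to v$; if $\sigma\notin\Sigma$, $\mathsf{when}\ \sigma\ \mathsf{then}\ e\ \mathsf{else}\ v\to v$ (both with $S$ unchanged, $\varepsilon$, active set $\Sigma$). Base rules (state unchanged unless stated, active set $\Sigma$): $!l\to v$ with $\varepsilon$ if $S(l)=v$; $\mathsf{new}(v,\tau),\Sigma,S\to l,S\cup\{l\mapsto(v,\tau)\},\mathsf{wr}_{l,\tau}(v),\Sigma$ for any $l\notin\mathrm{dom}(S)$; $l:=v,\Sigma,S\to (),S[l\mapsto(v,\tau)],\mathsf{wr}_{l,\tau}(v),\Sigma$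 if $l\in\mathrm{dom}(S)$, $\mathrm{type}(S,l)=\tau$; $(\lambda x.e)\,v\to[v/x]e$, $\mathsf{fst}(v,v')\to v$, $\mathsf{snd}(v,v')\to v'$, $\mathsf{case}\ \mathsf{inl}(v)\ldots\to[v/x]e'$, $\mathsf{case}\ \mathsf{inr}(v)\ldots\to[v/y]e''$, all with $\varepsilon$. **Unary relation** (sets of triples, defined by well-founded recursion on the step index $m$). $(S,m)\triangleright\theta$ iff $\mathrm{dom}\,\theta\subseteq\mathrm{dom}\,S$ and for all $l\in\mathrm{dom}\,\theta$: $\theta(l)=\mathrm{type}(S,l)$ and $(S(l),\theta,m)\in\mathcal{V}[\![\theta(l)]\!]$. $\mathcal{V}[\![A^p]\!]=\mathcal{V}[\![A]\!]$; $\mathcal{V}[\![\mathsf{unit}]\!]=\{((),\theta,m)\}$; $\mathcal{V}[\![\mathsf{nat}]\!]=\{(n,\theta,m)\}$; pairs/sums componentwise; $\mathcal{V}[\![\mathsf{ref}\,\tau]\!]=\{(l,\theta,m)\mid\theta(l)=\tau\}$; $(\lambda x.e,\theta,m)\in\mathcal{V}[\![\tau_1\xrightarrow{\Sigma,pc}\tau_2]\!]$ iff for all $\theta'\sqsupseteq\theta$, $m'<m$, $v$ with $(v,\theta',m')\in\mathcal{V}[\![\tau_1]\!]$: $([v/x]e,\theta',m')\in\mathcal{E}^{pc}[\![\tau_2]\!]$. $\mathcal{E}^{pc}[\![\tau]\!]=\mathcal{V}[\![\tau]\!]\cup\{(e,\theta,m)\mid e\notin\mathcal{V}$ and for all $S,\theta'\sqsupseteq\theta,m'<m,e',S',\omega,\Sigma,\Sigma'$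 with $(S,m')\triangleright\theta'$ and $e,\Sigma,S\to e',S',\omega,\Sigma'$: ($\omega=\varepsilon$ or $pc\sqsubseteq\mathrm{pol}(\omega)$) and there is $\theta''\sqsupseteq\theta'$ with $(S',m')\triangleright\theta''$ and $(e',\theta'',m')\in\mathcal{E}^{pc}[\![\tau]\!]\}$. **Attackers.** An attacker $\mathcal{A}=(a,\Sigma_{\mathcal{A}})$; $p\sqsubseteq\mathcal{A}$ iff $p\sqsubseteq\{(\Sigma_{\mathcal{A}}\Rightarrow a)\}$ (for labeled types via their label); for a lock set, $\Sigma\sqsubseteq\mathcal{A}$ iff $\Sigma\subseteq\Sigma_{\mathcal{A}}$; by convention $\mathrm{pol}(\varepsilon)\not\sqsubseteq\mathcal{A}$. $\mathrm{low}_{\mathcal{A}}(\Sigma)=\{\sigma\in\Sigma\mid\mathrm{LockPolicy}(\sigma)\sqsubseteq\mathcal{A}\}$; $\Sigma\approx_{\mathcal{A}}\Sigma'$ iff $\mathrm{low}_{\mathcal{A}}(\Sigma)=\mathrm{low}_{\mathcal{A}}(\Sigma')$. **Worlds.** $W=(\theta_1,\theta_2,\beta)$ with $\beta$ a partial bijection (injective partial function, viewed as a relation) from $\mathrm{dom}\,\theta_1$ to $\mathrm{dom}\,\theta_2$. $W'\sqsupseteq W$ iff $\theta_i\subseteq\theta_i'$ and $\beta\subseteq\beta'$. $(S_1,S_2,m)\triangleright_{\mathcal{A}}W$ iff $\mathrm{dom}\,\theta_i\subseteq\mathrm{dom}\,S_i$, $\theta_i(l)=\mathrm{type}(S_i,l)$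 for $l\in\mathrm{dom}\,\theta_i$, $\beta\subseteq\mathrm{dom}\,\theta_1\times\mathrm{dom}\,\theta_2$, and for all $(l_1,l_2)\in\beta$: $\theta_1(l_1)=\theta_2(l_2)$ and $(S_1(l_1),S_2(l_2),W,m)\in\mathcal{V}^{\mathcal{A}}[\![\theta_1(l_1)]\!]$. **Binary value relation** (well-founded recursion on $m$ and types). $\mathcal{V}^{\mathcal{A}}[\![A^p]\!]$: if $p\sqsubseteq\mathcal{A}$, the tuples $(v,v',W,m)\in\mathcal{V}^{\mathcal{A}}[\![A]\!]$; otherwise the tuples with $(v,W.\theta_1,m),(v',W.\theta_2,m)\in\mathcal{V}[\![A]\!]$ (unary). $\mathsf{unit}$: $((),(),W,m)$; $\mathsf{nat}$: $(n,n,W,m)$; pairs componentwise; sums: both $\mathsf{inl}$ with related payloads or both $\mathsf{inr}$; $\mathsf{ref}\,\tau$: $(l,l',W,m)$ with $W.\theta_1(l)=\tau=W.\theta_2(l')$, $(l,l')\in W.\beta$; $(\lambda x.e_1,\lambda x.e_2,W,m)\in\mathcal{V}^{\mathcal{A}}[\![\tau_1\xrightarrow{\Sigma,pc}\tau_2]\!]$ iff for all $W'\sqsupseteq W$, $m'<m$, $(v_1,v_2,W',m')\in\mathcal{V}^{\mathcal{A}}[\![\tau_1]\!]$, $\Sigma_1,\Sigma_2\supseteq\Sigma$: $([v_1/x]e_1,[v_2/x]e_2,W',\Sigma_1,\Sigma_2,m')\in\mathcal{E}^{\mathcal{A}}[\![\tau_2]\!]$, and $(\lambda x.e_i,W.\theta_i,m)\in\mathcal{V}[\![\tau_1\xrightarrow{\Sigma,pc}\tau_2]\!]$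 for $i=1,2$. **Observation relations.** Indistinguishability $\omega\equiv_{(W,m)}\omega'$ holds iff $\mathrm{pol}(\omega)\not\sqsubseteq\mathcal{A}$ and $\mathrm{pol}(\omega')\not\sqsubseteq\mathcal{A}$; or $\omega=\omega'$ is not a write; or $\omega=\mathsf{wr}_{l,\tau}(v)$, $\omega'=\mathsf{wr}_{l',\tau}(v')$ with $(v,v',W,m)\in\mathcal{V}^{\mathcal{A}}[\![\tau]\!]$ and $(l,l')\in W.\beta$. Irrelevance $\omega\approx^{(W,m)}\omega'$ holds iff $\omega=\omega'$ is not a write; or $\mathrm{pol}(\omega)\not\sqsubseteq\mathcal{A}$ or $\mathrm{pol}(\omega')\not\sqsubseteq\mathcal{A}$; or $\omega=\mathsf{wr}_{l,\tau}(v)$, $\omega'=\mathsf{wr}_{l',\tau}(v')$ with $(v,v',W,m)\in\mathcal{V}^{\mathcal{A}}[\![\tau]\!]$. **Binary expression relation.** $\mathcal{E}^{\mathcal{A}}[\![\tau]\!]=\{(v,v',W,\Sigma_1,\Sigma_2,m)\mid(v,v',W,m)\in\mathcal{V}^{\mathcal{A}}[\![\tau]\!]\}\cup\mathcal{E}^{\mathcal{A},\beta}[\![\tau]\!]$, where $(e_1,e_2,W,\Sigma,\Sigma',m)\in\mathcal{E}^{\mathcal{A},\beta}[\![\tau]\!]$ iff $\Sigma\approx_{\mathcal{A}}\Sigma'$ and for all $\Sigma_1\supseteq\Sigma$, $\Sigma_2\supseteq\Sigma'$ with $\Sigma_1\approx_{\mathcal{A}}\Sigma_2$, all $W'\sqsupseteq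 W$, $m'<m$, $S_1,S_2$ with $(S_1,S_2,m')\triangleright_{\mathcal{A}}W'$, at least one holds: (Par) $e_1,e_2\notin\mathcal{V}$ and for all steps $e_1,\Sigma_1,S_1\to e_1',S_1',\omega,\Sigma_1'$ and $e_2,\Sigma_2,S_2\to e_2',S_2',\omega',\Sigma_2'$: if $\omega\approx^{(W',m')}\omega'$ or $\Sigma_1'\sqsubseteq\mathcal{A}$ or $\Sigma_2'\sqsubseteq\mathcal{A}$, then there is $W''\sqsupseteq W'$ with $(S_1',S_2',m')\triangleright_{\mathcal{A}}W''$, $\omega\equiv_{(W'',m')}\omega'$ and $(e_1',e_2',W'',\Sigma,\Sigma',m')\in\mathcal{E}^{\mathcal{A}}[\![\tau]\!]$; (L) $e_1\notin\mathcal{V}$ and for every step $e_1,\Sigma_1,S_1\to e_1',S_1',\omega,\Sigma_1'$: $\mathrm{pol}(\omega)\not\sqsubseteq\mathcal{A}$ and there is $W''\sqsupseteq W'$ with $(S_1',S_2,m')\triangleright_{\mathcal{A}}W''$ and $(e_1',e_2,W'',\Sigma,\Sigma',m')\in\mathcal{E}^{\mathcal{A}}[\![\tau]\!]$; (R) symmetric to (L) with a step of $e_2$ from $\Sigma_2,S_2$, requiring $(S_1,S_2',m')\triangleright_{\mathcal{A}}W''$ and $(e_1,e_2',W'',\Sigma,\Sigma',m')\in\mathcal{E}^{\mathcal{A}}[\![\tau]\!]$. *)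

theory Defs
  imports Main
begin

text \<open>Actors have type 'a, locks have type 'l. A clause (Sigma => a) is the pair (Sigma, a).\<close>

type_synonym ('a, 'l) policy = "('l set \<times> 'a) set"

definition flows :: "('a, 'l) policy \<Rightarrow> ('a, 'l) policy \<Rightarrow> bool" where
  "flows p q \<longleftrightarrow> (\<forall>S2 a. (S2, a) \<in> q \<longrightarrow> (\<exists>S1. (S1, a) \<in> p \<and> S1 \<subseteq> S2))"

definition pbot :: "('a, 'l) policy" where
  "pbot = {({}, a) | a. True}"

definition pspec :: "('a, 'l) policy \<Rightarrow> 'l set \<Rightarrow> ('a, 'l) policy" where
  "pspec p L = {(S1 - L, a) | S1 a. (S1, a) \<in> p}"

datatype ('a, 'l) raw =
    TUnit
  | TNat
  | TSum "('a, 'l) lty" "('a, 'l) lty"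
  | TProd "('a, 'l) lty" "('a, 'l) lty"
  | TRef "('a, 'l) lty"
  | TFun "('a, 'l) lty" "'l set" "('l set \<times> 'a) set" "('a, 'l) lty"
and ('a, 'l) lty = Lab "('a, 'l) raw" "('l set \<times> 'a) set"

primrec lab :: "('a, 'l) lty \<Rightarrow> ('a, 'l) policy" where
  "lab (Lab A p) = p"

primrec restr :: "('a, 'l) lty \<Rightarrow> 'l set \<Rightarrow> ('a, 'l) lty" where
  "restr (Lab A p) L = Lab A (pspec p L)"

inductive sub_lty :: "('a, 'l) lty \<Rightarrow> ('a, 'l) lty \<Rightarrow> bool"
      and sub_raw :: "('a, 'l) raw \<Rightarrow> ('a, 'l) raw \<Rightarrow> bool" where
  sub_lab: "flows p p' \<Longrightarrow> sub_raw A B \<Longrightarrow> sub_lty (Lab A p) (Lab B p')"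
| sub_unit: "sub_raw TUnit TUnit"
| sub_nat: "sub_raw TNat TNat"
| sub_ref: "sub_raw (TRef t) (TRef t)"
| sub_prod: "sub_lty t0 t1 \<Longrightarrow> sub_lty t2 t3 \<Longrightarrow> sub_raw (TProd t0 t2) (TProd t1 t3)"
| sub_sum: "sub_lty t0 t1 \<Longrightarrow> sub_lty t2 t3 \<Longrightarrow> sub_raw (TSum t0 t2) (TSum t1 t3)"
| sub_fun: "sub_lty t0 t1 \<Longrightarrow> sub_lty t2 t3 \<Longrightarrow> flows p' p \<Longrightarrow> L \<subseteq> L' \<Longrightarrow>
            sub_raw (TFun t1 L p t2) (TFun t0 L' p' t3)"

type_synonym vname = string
type_synonym loc = nat

datatype ('a, 'l) exp =
    Var vname
  | Unit
  | Num nat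
  | Lam vname "('a, 'l) exp"
  | Pair "('a, 'l) exp" "('a, 'l) exp"
  | Fst "('a, 'l) exp"
  | Snd "('a, 'l) exp"
  | Inl "('a, 'l) exp"
  | Inr "('a, 'l) exp"
  | Case "('a, 'l) exp" vname "('a, 'l) exp" vname "('a, 'l) exp"
  | App "('a, 'l) exp" "('a, 'l) exp"
  | New "('a, 'l) exp" "('a, 'l) lty"
  | Deref "('a, 'l) exp"
  | Assign "('a, 'l) exp" "('a, 'l) exp"
  | OpenIn 'l "('a, 'l) exp"
  | Opened 'l "('a, 'l) exp"
  | CloseIn 'l "('a, 'l) exp"
  | Closed 'l "('a, 'l) exp"
  | When 'l "('a, 'l) exp" "('a, 'l) exp"
  | Loc loc

primrec is_val :: "('a, 'l) exp \<Rightarrow> bool" where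
  "is_val (Var x) = False"
| "is_val Unit = True"
| "is_val (Num n) = True"
| "is_val (Lam x e) = True"
| "is_val (Pair e1 e2) = (is_val e1 \<and> is_val e2)"
| "is_val (Fst e) = False"
| "is_val (Snd e) = False"
| "is_val (Inl e) = is_val e"
| "is_val (Inr e) = is_val e"
| "is_val (Case e x e1 y e2) = False"
| "is_val (App e1 e2) = False"
| "is_val (New e t) = False"
| "is_val (Deref e) = False"
| "is_val (Assign e1 e2) = False"
| "is_val (OpenIn s e) = False"
| "is_val (Opened s e) = False"
| "is_val (CloseIn s e) = False"
| "is_val (Closed s e) = False"
| "is_val (When s e1 e2) = False"
| "is_val (Loc l) = True"

text \<open>Substitution [v/x]e (no renaming; binders shadow).\<close>
primrec subst :: "vname \<Rightarrow> ('a, 'l) exp \<Rightarrow> ('a, 'l) exp \<Rightarrow> ('a, 'l) exp" where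
  "subst x v (Var y) = (if y = x then v else Var y)"
| "subst x v Unit = Unit"
| "subst x v (Num n) = Num n"
| "subst x v (Lam y e) = (if y = x then Lam y e else Lam y (subst x v e))"
| "subst x v (Pair e1 e2) = Pair (subst x v e1) (subst x v e2)"
| "subst x v (Fst e) = Fst (subst x v e)"
| "subst x v (Snd e) = Snd (subst x v e)"
| "subst x v (Inl e) = Inl (subst x v e)"
| "subst x v (Inr e) = Inr (subst x v e)"
| "subst x v (Case e y e1 z e2) =
     Case (subst x v e) y (if y = x then e1 else subst x v e1) z (if z = x then e2 else subst x v e2)"
| "subst x v (App e1 e2) = App (subst x v e1) (subst x v e2)"
| "subst x v (New e t) = New (subst x v e) t"
| "subst x v (Deref e) = Deref (subst x v e)"
| "subst x v (Assign e1 e2) = Assign (subst x v e1) (subst x v e2)"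
| "subst x v (OpenIn s e) = OpenIn s (subst x v e)"
| "subst x v (Opened s e) = Opened s (subst x v e)"
| "subst x v (CloseIn s e) = CloseIn s (subst x v e)"
| "subst x v (Closed s e) = Closed s (subst x v e)"
| "subst x v (When s e1 e2) = When s (subst x v e1) (subst x v e2)"
| "subst x v (Loc l) = Loc l"

type_synonym ('a, 'l) state = "loc \<rightharpoonup> (('a, 'l) exp \<times> ('a, 'l) lty)"

definition wf_state :: "('a, 'l) state \<Rightarrow> bool" where
  "wf_state S \<longleftrightarrow> finite (dom S) \<and> (\<forall>l v t. S l = Some (v, t) \<longrightarrow> is_val v)"

datatype ('a, 'l) obs =
    Eps
  | Wr loc "('a, 'l) lty" "('a, 'l) exp"
  | ObOpen 'l
  | ObClose 'l
  | ObUnopen 'l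
  | ObUnclose 'l

primrec pol :: "('l \<Rightarrow> ('a, 'l) policy) \<Rightarrow> ('a, 'l) obs \<Rightarrow> ('a, 'l) policy option" where
  "pol LP Eps = None"
| "pol LP (Wr l t v) = Some (lab t)"
| "pol LP (ObOpen s) = Some (LP s)"
| "pol LP (ObClose s) = Some (LP s)"
| "pol LP (ObUnopen s) = Some (LP s)"
| "pol LP (ObUnclose s) = Some (LP s)"

primrec is_write :: "('a, 'l) obs \<Rightarrow> bool" where
  "is_write Eps = False"
| "is_write (Wr l t v) = True"
| "is_write (ObOpen s) = False"
| "is_write (ObClose s) = False"
| "is_write (ObUnopen s) = False"
| "is_write (ObUnclose s) = False"

section \<open>Reduction  e, Sigma, S --> e', S', omega, Sigma'\<close>

inductive step :: "('a, 'l) exp \<Rightarrow> 'l set \<Rightarrow> ('a, 'l) state \<Rightarrow>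
                   ('a, 'l) exp \<Rightarrow> ('a, 'l) state \<Rightarrow> ('a, 'l) obs \<Rightarrow> 'l set \<Rightarrow> bool" where
  c_new: "step e L S e1 S' w L' \<Longrightarrow> step (New e t) L S (New e1 t) S' w L'"
| c_deref: "step e L S e1 S' w L' \<Longrightarrow> step (Deref e) L S (Deref e1) S' w L'"
| c_assign1: "step e L S e1 S' w L' \<Longrightarrow> step (Assign e e2) L S (Assign e1 e2) S' w L'"
| c_assign2: "step e L S e1 S' w L' \<Longrightarrow> step (Assign (Loc l) e) L S (Assign (Loc l) e1) S' w L'"
| c_app1: "step e L S e1 S' w L' \<Longrightarrow> step (App e e2) L S (App e1 e2) S' w L'"
| c_app2: "step e L S e1 S' w L' \<Longrightarrow> step (App (Lam x b) e) L S (App (Lam x b) e1) S' w L'"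
| c_pair1: "step e L S e1 S' w L' \<Longrightarrow> step (Pair e e2) L S (Pair e1 e2) S' w L'"
| c_pair2: "is_val v \<Longrightarrow> step e L S e1 S' w L' \<Longrightarrow> step (Pair v e) L S (Pair v e1) S' w L'"
| c_fst: "step e L S e1 S' w L' \<Longrightarrow> step (Fst e) L S (Fst e1) S' w L'"
| c_snd: "step e L S e1 S' w L' \<Longrightarrow> step (Snd e) L S (Snd e1) S' w L'"
| c_inl: "step e L S e1 S' w L' \<Longrightarrow> step (Inl e) L S (Inl e1) S' w L'"
| c_inr: "step e L S e1 S' w L' \<Longrightarrow> step (Inr e) L S (Inr e1) S' w L'"
| c_case: "step e L S e1 S' w L' \<Longrightarrow> step (Case e x a y b) L S (Case e1 x a y b) S' w L'"
| open_: "step (OpenIn s e) L S (Opened s e) S (ObOpen s) L"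
| opened_c: "step e (insert s L) S e1 S' w L' \<Longrightarrow> step (Opened s e) L S (Opened s e1) S' w L'"
| opened_v: "is_val v \<Longrightarrow> step (Opened s v) L S v S (ObUnopen s) L"
| close_: "step (CloseIn s e) L S (Closed s e) S (ObClose s) L"
| closed_c: "step e (L - {s}) S e1 S' w L' \<Longrightarrow> step (Closed s e) L S (Closed s e1) S' w L'"
| closed_v: "is_val v \<Longrightarrow> step (Closed s v) L S v S (ObUnclose s) L"
| when_t: "s \<in> L \<Longrightarrow> step e L S e1 S' w L' \<Longrightarrow> step (When s e e2) L S (When s e1 e2) S' w L'"
| when_f: "s \<notin> L \<Longrightarrow> step e2 L S e1 S' w L' \<Longrightarrow> step (When s e e2) L S (When s e e1) S' w L'"
| when_tv: "s \<in> L \<Longrightarrow> is_val v \<Longrightarrow> step (When s v e2) L S v S Eps L"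
| when_fv: "s \<notin> L \<Longrightarrow> is_val v \<Longrightarrow> step (When s e v) L S v S Eps L"
| deref: "S l = Some (v, t) \<Longrightarrow> step (Deref (Loc l)) L S v S Eps L"
| new: "is_val v \<Longrightarrow> l \<notin> dom S \<Longrightarrow> step (New v t) L S (Loc l) (S(l \<mapsto> (v, t))) (Wr l t v) L"
| assign: "is_val v \<Longrightarrow> S l = Some (u, t) \<Longrightarrow>
           step (Assign (Loc l) v) L S Unit (S(l \<mapsto> (v, t))) (Wr l t v) L"
| beta: "is_val v \<Longrightarrow> step (App (Lam x e) v) L S (subst x v e) S Eps L"
| fst_: "is_val v \<Longrightarrow> is_val v' \<Longrightarrow> step (Fst (Pair v v')) L S v S Eps L"
| snd_: "is_val v \<Longrightarrow> is_val v' \<Longrightarrow> step (Snd (Pair v v')) L S v' S Eps L"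
| case_l: "is_val v \<Longrightarrow> step (Case (Inl v) x a y b) L S (subst x v a) S Eps L"
| case_r: "is_val v \<Longrightarrow> step (Case (Inr v) x a y b) L S (subst y v b) S Eps L"

section \<open>Unary logical relation\<close>

type_synonym ('a, 'l) senv = "loc \<rightharpoonup> ('a, 'l) lty"

definition senv_ext :: "('a, 'l) senv \<Rightarrow> ('a, 'l) senv \<Rightarrow> bool" where
  "senv_ext th th' \<longleftrightarrow> th \<subseteq>\<^sub>m th' \<and> finite (dom th')"

type_synonym ('a, 'l) uVrel = "('a, 'l) lty \<Rightarrow> ('a, 'l) senv \<Rightarrow> ('a, 'l) exp \<Rightarrow> bool"
type_synonym ('a, 'l) uErel =
  "('a, 'l) policy \<Rightarrow> ('a, 'l) lty \<Rightarrow> ('a, 'l) senv \<Rightarrow> ('a, 'l) exp \<Rightarrow> bool"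

text \<open>Value relation at level m, given the relations VL k / EL k at the lower levels k < m.\<close>
primrec uV_raw :: "(nat \<Rightarrow> ('a, 'l) uVrel) \<Rightarrow> (nat \<Rightarrow> ('a, 'l) uErel) \<Rightarrow> nat \<Rightarrow>
                    ('a, 'l) raw \<Rightarrow> ('a, 'l) senv \<Rightarrow> ('a, 'l) exp \<Rightarrow> bool"
    and uV_lty :: "(nat \<Rightarrow> ('a, 'l) uVrel) \<Rightarrow> (nat \<Rightarrow> ('a, 'l) uErel) \<Rightarrow> nat \<Rightarrow>
                    ('a, 'l) lty \<Rightarrow> ('a, 'l) senv \<Rightarrow> ('a, 'l) exp \<Rightarrow> bool" where
  "uV_raw VL EL m TUnit th v = (v = Unit)"
| "uV_raw VL EL m TNat th v = (\<exists>n. v = Num n)"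
| "uV_raw VL EL m (TSum t1 t2) th v =
     ((\<exists>v1. v = Inl v1 \<and> uV_lty VL EL m t1 th v1) \<or> (\<exists>v2. v = Inr v2 \<and> uV_lty VL EL m t2 th v2))"
| "uV_raw VL EL m (TProd t1 t2) th v =
     (\<exists>v1 v2. v = Pair v1 v2 \<and> uV_lty VL EL m t1 th v1 \<and> uV_lty VL EL m t2 th v2)"
| "uV_raw VL EL m (TRef t) th v = (\<exists>l. v = Loc l \<and> th l = Some t)"
| "uV_raw VL EL m (TFun t1 L pc t2) th v =
     (\<exists>x e. v = Lam x e \<and>
        (\<forall>th' m' u. senv_ext th th' \<longrightarrow> m' < m \<longrightarrow> VL m' t1 th' u \<longrightarrow> EL m' pc t2 th' (subst x u e)))"
| "uV_lty VL EL m (Lab A p) th v = uV_raw VL EL m A th v"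

text \<open>(S, m) |> theta, where V is the value relation at level m.\<close>
definition usat :: "('a, 'l) uVrel \<Rightarrow> ('a, 'l) state \<Rightarrow> ('a, 'l) senv \<Rightarrow> bool" where
  "usat V S th \<longleftrightarrow> dom th \<subseteq> dom S \<and>
     (\<forall>l t. th l = Some t \<longrightarrow> (\<exists>v. S l = Some (v, t) \<and> V t th v))"

definition uStep :: "('l \<Rightarrow> ('a, 'l) policy) \<Rightarrow> (nat \<Rightarrow> ('a, 'l) uVrel \<times> ('a, 'l) uErel) \<Rightarrow> nat \<Rightarrow> ('a, 'l) uVrel \<times> ('a, 'l) uErel" where
  "uStep LP R m =
    (let VL = (\<lambda>k. fst (R k)); EL = (\<lambda>k. snd (R k));
         Vm = uV_lty VL EL m
     in (Vm,
         \<lambda>pc t th e. Vm t th e \<or>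
           (\<not> is_val e \<and>
            (\<forall>S th' m' e' S' w L L'. wf_state S \<longrightarrow> senv_ext th th' \<longrightarrow> m' < m \<longrightarrow>
               usat (VL m') S th' \<longrightarrow> step e L S e' S' w L' \<longrightarrow>
               (w = Eps \<or> (\<exists>p. pol LP w = Some p \<and> flows pc p)) \<and>
               (\<exists>th''. senv_ext th' th'' \<and> usat (VL m') S' th'' \<and> EL m' pc t th'' e')))))"


fun ujunk :: "nat \<Rightarrow> ('a, 'l) uVrel \<times> ('a, 'l) uErel" where
  "ujunk k = ((\<lambda>_ _ _. False), (\<lambda>_ _ _ _. False))"

function uLev :: "('l \<Rightarrow> ('a, 'l) policy) \<Rightarrow> nat \<Rightarrow> ('a, 'l) uVrel \<times> ('a, 'l) uErel" where
  "uLev LP m = uStep LP (\<lambda>k. if k < m then uLev LP k else ujunk k) m"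
  by pat_completeness auto
termination by (relation "measure (\<lambda>(LP, m). m)") auto

text \<open>The unary relations: (v, theta, m) in V[[tau]], (e, theta, m) in E^pc[[tau]], and V[[A]] for raw A.\<close>
definition uV :: "('l \<Rightarrow> ('a, 'l) policy) \<Rightarrow> ('a, 'l) lty \<Rightarrow> ('a, 'l) exp \<Rightarrow> ('a, 'l) senv \<Rightarrow> nat \<Rightarrow> bool" where
  "uV LP t v th m = fst (uLev LP m) t th v"

definition uE :: "('l \<Rightarrow> ('a, 'l) policy) \<Rightarrow> ('a, 'l) policy \<Rightarrow> ('a, 'l) lty \<Rightarrow> ('a, 'l) exp \<Rightarrow> ('a, 'l) senv \<Rightarrow> nat \<Rightarrow> bool" where
  "uE LP pc t e th m = snd (uLev LP m) pc t th e"

definition uVr :: "('l \<Rightarrow> ('a, 'l) policy) \<Rightarrow> ('a, 'l) raw \<Rightarrow> ('a, 'l) exp \<Rightarrow> ('a, 'l) senv \<Rightarrow> nat \<Rightarrow> bool" where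
  "uVr LP A v th m =
     uV_raw (\<lambda>k. fst (if k < m then uLev LP k else ujunk k))
            (\<lambda>k. snd (if k < m then uLev LP k else ujunk k)) m A th v"

section \<open>Attackers and worlds\<close>

text \<open>An attacker is a pair (a, Sigma_A).\<close>
type_synonym ('a, 'l) attacker = "'a \<times> 'l set"

definition flowsA :: "('a, 'l) attacker \<Rightarrow> ('a, 'l) policy \<Rightarrow> bool" where
  "flowsA Att p \<longleftrightarrow> flows p {(snd Att, fst Att)}"

text \<open>pol(omega) below the attacker; false for epsilon by convention.\<close>
definition flowsA_o :: "('l \<Rightarrow> ('a, 'l) policy) \<Rightarrow> ('a, 'l) attacker \<Rightarrow> ('a, 'l) obs \<Rightarrow> bool" where
  "flowsA_o LP Att w \<longleftrightarrow> (case pol LP w of None \<Rightarrow> False | Some p \<Rightarrow> flowsA Att p)"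

definition lowA :: "('l \<Rightarrow> ('a, 'l) policy) \<Rightarrow> ('a, 'l) attacker \<Rightarrow> 'l set \<Rightarrow> 'l set" where
  "lowA LP Att L = {s \<in> L. flowsA Att (LP s)}"

definition lockeq :: "('l \<Rightarrow> ('a, 'l) policy) \<Rightarrow> ('a, 'l) attacker \<Rightarrow> 'l set \<Rightarrow> 'l set \<Rightarrow> bool" where
  "lockeq LP Att L L' \<longleftrightarrow> lowA LP Att L = lowA LP Att L'"

type_synonym ('a, 'l) world = "('a, 'l) senv \<times> ('a, 'l) senv \<times> (loc \<times> loc) set"

definition th1 :: "('a, 'l) world \<Rightarrow> ('a, 'l) senv" where "th1 W = fst W"
definition th2 :: "('a, 'l) world \<Rightarrow> ('a, 'l) senv" where "th2 W = fst (snd W)"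
definition wbeta :: "('a, 'l) world \<Rightarrow> (loc \<times> loc) set" where "wbeta W = snd (snd W)"

definition is_world :: "('a, 'l) world \<Rightarrow> bool" where
  "is_world W \<longleftrightarrow> finite (dom (th1 W)) \<and> finite (dom (th2 W)) \<and>
     wbeta W \<subseteq> dom (th1 W) \<times> dom (th2 W) \<and>
     (\<forall>l l1 l2. (l, l1) \<in> wbeta W \<longrightarrow> (l, l2) \<in> wbeta W \<longrightarrow> l1 = l2) \<and>
     (\<forall>l l1 l2. (l1, l) \<in> wbeta W \<longrightarrow> (l2, l) \<in> wbeta W \<longrightarrow> l1 = l2)"

definition world_ext :: "('a, 'l) world \<Rightarrow> ('a, 'l) world \<Rightarrow> bool" where
  "world_ext W W' \<longleftrightarrow> is_world W' \<and> th1 W \<subseteq>\<^sub>m th1 W' \<and> th2 W \<subseteq>\<^sub>m th2 W' \<and> wbeta W \<subseteq> wbeta W'"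

section \<open>Binary logical relation\<close>

type_synonym ('a, 'l) bVrel = "('a, 'l) lty \<Rightarrow> ('a, 'l) world \<Rightarrow> ('a, 'l) exp \<Rightarrow> ('a, 'l) exp \<Rightarrow> bool"
type_synonym ('a, 'l) bErel = "('a, 'l) lty \<Rightarrow> ('a, 'l) world \<Rightarrow> 'l set \<Rightarrow> 'l set \<Rightarrow>
                                ('a, 'l) exp \<Rightarrow> ('a, 'l) exp \<Rightarrow> bool"

primrec bV_raw :: "('l \<Rightarrow> ('a, 'l) policy) \<Rightarrow> ('a, 'l) attacker \<Rightarrow>
                    (nat \<Rightarrow> ('a, 'l) bVrel) \<Rightarrow> (nat \<Rightarrow> ('a, 'l) bErel) \<Rightarrow> nat \<Rightarrow>
                    ('a, 'l) raw \<Rightarrow> ('a, 'l) world \<Rightarrow> ('a, 'l) exp \<Rightarrow> ('a, 'l) exp \<Rightarrow> bool"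
    and bV_lty :: "('l \<Rightarrow> ('a, 'l) policy) \<Rightarrow> ('a, 'l) attacker \<Rightarrow>
                    (nat \<Rightarrow> ('a, 'l) bVrel) \<Rightarrow> (nat \<Rightarrow> ('a, 'l) bErel) \<Rightarrow> nat \<Rightarrow>
                    ('a, 'l) lty \<Rightarrow> ('a, 'l) world \<Rightarrow> ('a, 'l) exp \<Rightarrow> ('a, 'l) exp \<Rightarrow> bool" where
  "bV_raw LP Att VL EL m TUnit W v v' = (v = Unit \<and> v' = Unit)"
| "bV_raw LP Att VL EL m TNat W v v' = (\<exists>n. v = Num n \<and> v' = Num n)"
| "bV_raw LP Att VL EL m (TSum t1 t2) W v v' =
     ((\<exists>u u'. v = Inl u \<and> v' = Inl u' \<and> bV_lty LP Att VL EL m t1 W u u') \<or>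
      (\<exists>u u'. v = Inr u \<and> v' = Inr u' \<and> bV_lty LP Att VL EL m t2 W u u'))"
| "bV_raw LP Att VL EL m (TProd t1 t2) W v v' =
     (\<exists>a b a' b'. v = Pair a b \<and> v' = Pair a' b' \<and>
        bV_lty LP Att VL EL m t1 W a a' \<and> bV_lty LP Att VL EL m t2 W b b')"
| "bV_raw LP Att VL EL m (TRef t) W v v' =
     (\<exists>l l'. v = Loc l \<and> v' = Loc l' \<and> th1 W l = Some t \<and> th2 W l' = Some t \<and> (l, l') \<in> wbeta W)"
| "bV_raw LP Att VL EL m (TFun t1 L pc t2) W v v' =
     (\<exists>x1 b1 x2 b2. v = Lam x1 b1 \<and> v' = Lam x2 b2 \<and>
        (\<forall>W' m' u1 u2 L1 L2. world_ext W W' \<longrightarrow> m' < m \<longrightarrow> VL m' t1 W' u1 u2 \<longrightarrow>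
            L \<subseteq> L1 \<longrightarrow> L \<subseteq> L2 \<longrightarrow> EL m' t2 W' L1 L2 (subst x1 u1 b1) (subst x2 u2 b2)) \<and>
        uVr LP (TFun t1 L pc t2) v (th1 W) m \<and> uVr LP (TFun t1 L pc t2) v' (th2 W) m)"
| "bV_lty LP Att VL EL m (Lab A p) W v v' =
     (if flowsA Att p then bV_raw LP Att VL EL m A W v v'
      else uVr LP A v (th1 W) m \<and> uVr LP A v' (th2 W) m)"

text \<open>(S1, S2, m) |>_A W, where V is the binary value relation at level m.\<close>
definition bsat :: "('a, 'l) bVrel \<Rightarrow> ('a, 'l) state \<Rightarrow> ('a, 'l) state \<Rightarrow> ('a, 'l) world \<Rightarrow> bool" where
  "bsat V S1 S2 W \<longleftrightarrow>
     dom (th1 W) \<subseteq> dom S1 \<and> dom (th2 W) \<subseteq> dom S2 \<and>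
     (\<forall>l t. th1 W l = Some t \<longrightarrow> (\<exists>v. S1 l = Some (v, t))) \<and>
     (\<forall>l t. th2 W l = Some t \<longrightarrow> (\<exists>v. S2 l = Some (v, t))) \<and>
     wbeta W \<subseteq> dom (th1 W) \<times> dom (th2 W) \<and>
     (\<forall>l1 l2. (l1, l2) \<in> wbeta W \<longrightarrow>
        th1 W l1 = th2 W l2 \<and>
        V (the (th1 W l1)) W (fst (the (S1 l1))) (fst (the (S2 l2))))"

definition obs_eq :: "('l \<Rightarrow> ('a, 'l) policy) \<Rightarrow> ('a, 'l) attacker \<Rightarrow> ('a, 'l) bVrel \<Rightarrow>
                      ('a, 'l) world \<Rightarrow> ('a, 'l) obs \<Rightarrow> ('a, 'l) obs \<Rightarrow> bool" where
  "obs_eq LP Att V W w w' \<longleftrightarrow>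
     (\<not> flowsA_o LP Att w \<and> \<not> flowsA_o LP Att w') \<or>
     (w = w' \<and> \<not> is_write w) \<or>
     (\<exists>l l' t v v'. w = Wr l t v \<and> w' = Wr l' t v' \<and> V t W v v' \<and> (l, l') \<in> wbeta W)"

definition obs_irr :: "('l \<Rightarrow> ('a, 'l) policy) \<Rightarrow> ('a, 'l) attacker \<Rightarrow> ('a, 'l) bVrel \<Rightarrow>
                       ('a, 'l) world \<Rightarrow> ('a, 'l) obs \<Rightarrow> ('a, 'l) obs \<Rightarrow> bool" where
  "obs_irr LP Att V W w w' \<longleftrightarrow>
     (w = w' \<and> \<not> is_write w) \<or>
     (\<not> flowsA_o LP Att w \<or> \<not> flowsA_o LP Att w') \<or>
     (\<exists>l l' t v v'. w = Wr l t v \<and> w' = Wr l' t v' \<and> V t W v v')"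

definition bStep :: "('l \<Rightarrow> ('a, 'l) policy) \<Rightarrow> ('a, 'l) attacker \<Rightarrow>
                     (nat \<Rightarrow> ('a, 'l) bVrel \<times> ('a, 'l) bErel) \<Rightarrow> nat \<Rightarrow> ('a, 'l) bVrel \<times> ('a, 'l) bErel" where
  "bStep LP Att R m =
    (let VL = (\<lambda>k. fst (R k)); EL = (\<lambda>k. snd (R k));
         Vm = bV_lty LP Att VL EL m
     in (Vm,
         \<lambda>t W L L' e1 e2. Vm t W e1 e2 \<or>
          (lockeq LP Att L L' \<and>
           (\<forall>L1 L2 W' m' S1 S2.
              L \<subseteq> L1 \<longrightarrow> L' \<subseteq> L2 \<longrightarrow> lockeq LP Att L1 L2 \<longrightarrow> world_ext W W' \<longrightarrow> m' < m \<longrightarrow>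
              wf_state S1 \<longrightarrow> wf_state S2 \<longrightarrow> bsat (VL m') S1 S2 W' \<longrightarrow>
              \<comment> \<open>(Par)\<close>
              (\<not> is_val e1 \<and> \<not> is_val e2 \<and>
               (\<forall>e1' S1' w L1' e2' S2' w' L2'.
                  step e1 L1 S1 e1' S1' w L1' \<longrightarrow> step e2 L2 S2 e2' S2' w' L2' \<longrightarrow>
                  (obs_irr LP Att (VL m') W' w w' \<or> L1' \<subseteq> snd Att \<or> L2' \<subseteq> snd Att) \<longrightarrow>
                  (\<exists>W''. world_ext W' W'' \<and> bsat (VL m') S1' S2' W'' \<and>
                         obs_eq LP Att (VL m') W'' w w' \<and> EL m' t W'' L L' e1' e2'))) \<or>
              \<comment> \<open>(L)\<close>
              (\<not> is_val e1 \<and>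
               (\<forall>e1' S1' w L1'. step e1 L1 S1 e1' S1' w L1' \<longrightarrow>
                  \<not> flowsA_o LP Att w \<and>
                  (\<exists>W''. world_ext W' W'' \<and> bsat (VL m') S1' S2 W'' \<and> EL m' t W'' L L' e1' e2))) \<or>
              \<comment> \<open>(R)\<close>
              (\<not> is_val e2 \<and>
               (\<forall>e2' S2' w L2'. step e2 L2 S2 e2' S2' w L2' \<longrightarrow>
                  \<not> flowsA_o LP Att w \<and>
                  (\<exists>W''. world_ext W' W'' \<and> bsat (VL m') S1 S2' W'' \<and> EL m' t W'' L L' e1 e2')))))))"

fun bjunk :: "nat \<Rightarrow> ('a, 'l) bVrel \<times> ('a, 'l) bErel" where
  "bjunk k = ((\<lambda>_ _ _ _. False), (\<lambda>_ _ _ _ _ _. False))"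

function bLev :: "('l \<Rightarrow> ('a, 'l) policy) \<Rightarrow> ('a, 'l) attacker \<Rightarrow> nat \<Rightarrow> ('a, 'l) bVrel \<times> ('a, 'l) bErel" where
  "bLev LP Att m = bStep LP Att (\<lambda>k. if k < m then bLev LP Att k else bjunk k) m"
  by pat_completeness auto
termination by (relation "measure (\<lambda>(LP, Att, m). m)") auto

text \<open>(v, v', W, m) in V^A[[tau]] and (e, e', W, Sigma, Sigma', m) in E^A[[tau]].\<close>
definition bV :: "('l \<Rightarrow> ('a, 'l) policy) \<Rightarrow> ('a, 'l) attacker \<Rightarrow> ('a, 'l) lty \<Rightarrow>
                  ('a, 'l) exp \<Rightarrow> ('a, 'l) exp \<Rightarrow> ('a, 'l) world \<Rightarrow> nat \<Rightarrow> bool" where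
  "bV LP Att t v v' W m = fst (bLev LP Att m) t W v v'"

definition bE :: "('l \<Rightarrow> ('a, 'l) policy) \<Rightarrow> ('a, 'l) attacker \<Rightarrow> ('a, 'l) lty \<Rightarrow>
                  ('a, 'l) exp \<Rightarrow> ('a, 'l) exp \<Rightarrow> ('a, 'l) world \<Rightarrow> 'l set \<Rightarrow> 'l set \<Rightarrow> nat \<Rightarrow> bool" where
  "bE LP Att t e e' W L L' m = snd (bLev LP Att m) t W L L' e e'"

end

theory Submission imports Defs begin

(* New(-, t) is an evaluation context, and the expression relation is compatible with evaluation
   contexts: wrapping both sides in the context preserves each of its step clauses (Par), (L), (R),
   so by induction on the step index it suffices to treat values e, e' related at t'.  Both sides
   then allocate fresh locations l, l', and the stores stay related in the world extended by
   l, l' : t and (l, l') in the bijection, provided the stored values are related at t.  The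
   relation only asks for related results when the two write observations are irrelevant or a
   lock set is visible to the attacker.  In the first case the label of t is invisible (so only
   unary facts are needed) or the values are related at t already; in the second case the lock
   set Sigma (or Sigma') lies below the attacker's locks, so specializing the label of t' by it
   hides nothing from the attacker, and subtyping carries the relation from t' to t.  The new
   locations are then related at (ref t)^bot. *)

declare uLev.simps [simp del] bLev.simps [simp del]

abbreviation uV_at :: "('l \<Rightarrow> ('a, 'l) policy) \<Rightarrow> nat \<Rightarrow> ('a, 'l) uVrel" where
  "uV_at LP k \<equiv> \<lambda>t th v. uV LP t v th k"

abbreviation bV_at :: "('l \<Rightarrow> ('a, 'l) policy) \<Rightarrow> ('a, 'l) attacker \<Rightarrow> nat \<Rightarrow> ('a, 'l) bVrel" where
  "bV_at LP Att k \<equiv> \<lambda>t W v v'. bV LP Att t v v' W k"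

lemma uV_eq_uV_lty:
  "uV LP t v th m = uV_lty (\<lambda>k. fst (if k < m then uLev LP k else ujunk k))
                           (\<lambda>k. snd (if k < m then uLev LP k else ujunk k)) m t th v"
  unfolding uV_def by (subst uLev.simps) (simp add: uStep_def Let_def)

lemma uV_Lab: "uV LP (Lab A p) v th m = uVr LP A v th m"
  by (simp add: uV_eq_uV_lty uVr_def)

lemma uVr_simps:
  "uVr LP TUnit v th m = (v = Unit)"
  "uVr LP TNat v th m = (\<exists>n. v = Num n)"
  "uVr LP (TSum t1 t2) v th m =
     ((\<exists>v1. v = Inl v1 \<and> uV LP t1 v1 th m) \<or> (\<exists>v2. v = Inr v2 \<and> uV LP t2 v2 th m))"
  "uVr LP (TProd t1 t2) v th m = (\<exists>v1 v2. v = Pair v1 v2 \<and> uV LP t1 v1 th m \<and> uV LP t2 v2 th m)"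
  "uVr LP (TRef t) v th m = (\<exists>l. v = Loc l \<and> th l = Some t)"
  by (simp_all add: uVr_def uV_eq_uV_lty)

lemma uVr_TFun:
  "uVr LP (TFun t1 L pc t2) v th m = (\<exists>x e. v = Lam x e \<and>
     (\<forall>th' m' u. senv_ext th th' \<longrightarrow> m' < m \<longrightarrow> uV LP t1 u th' m' \<longrightarrow> uE LP pc t2 (subst x u e) th' m'))"
  by (auto simp: uVr_def uV_def uE_def)

lemma uE_iff:
  "uE LP pc t e th m \<longleftrightarrow> uV LP t e th m \<or> (\<not> is_val e \<and>
     (\<forall>S th' m' e' S' w L L'. wf_state S \<longrightarrow> senv_ext th th' \<longrightarrow> m' < m \<longrightarrow>
        usat (uV_at LP m') S th' \<longrightarrow> step e L S e' S' w L' \<longrightarrow>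
        (w = Eps \<or> (\<exists>p. pol LP w = Some p \<and> flows pc p)) \<and>
        (\<exists>th''. senv_ext th' th'' \<and> usat (uV_at LP m') S' th'' \<and> uE LP pc t e' th'' m')))"
  unfolding uE_def
  by (subst uLev.simps) (simp add: uStep_def Let_def uV_eq_uV_lty[symmetric] uV_def uE_def cong: imp_cong)

definition bVr :: "('l \<Rightarrow> ('a, 'l) policy) \<Rightarrow> ('a, 'l) attacker \<Rightarrow> ('a, 'l) raw \<Rightarrow>
                   ('a, 'l) exp \<Rightarrow> ('a, 'l) exp \<Rightarrow> ('a, 'l) world \<Rightarrow> nat \<Rightarrow> bool" where
  "bVr LP Att A v v' W m =
     bV_raw LP Att (\<lambda>k. fst (if k < m then bLev LP Att k else bjunk k))
            (\<lambda>k. snd (if k < m then bLev LP Att k else bjunk k)) m A W v v'"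

lemma bV_eq_bV_lty:
  "bV LP Att t v v' W m = bV_lty LP Att (\<lambda>k. fst (if k < m then bLev LP Att k else bjunk k))
                           (\<lambda>k. snd (if k < m then bLev LP Att k else bjunk k)) m t W v v'"
  unfolding bV_def by (subst bLev.simps) (simp add: bStep_def Let_def)

lemma bV_Lab:
  "bV LP Att (Lab A p) v v' W m =
     (if flowsA Att p then bVr LP Att A v v' W m else uVr LP A v (th1 W) m \<and> uVr LP A v' (th2 W) m)"
  by (simp add: bV_eq_bV_lty bVr_def)

lemma bVr_simps:
  "bVr LP Att TUnit v v' W m = (v = Unit \<and> v' = Unit)"
  "bVr LP Att TNat v v' W m = (\<exists>n. v = Num n \<and> v' = Num n)"
  "bVr LP Att (TSum t1 t2) v v' W m =
     ((\<exists>u u'. v = Inl u \<and> v' = Inl u' \<and> bV LP Att t1 u u' W m) \<or>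
      (\<exists>u u'. v = Inr u \<and> v' = Inr u' \<and> bV LP Att t2 u u' W m))"
  "bVr LP Att (TProd t1 t2) v v' W m =
     (\<exists>a b a' b'. v = Pair a b \<and> v' = Pair a' b' \<and> bV LP Att t1 a a' W m \<and> bV LP Att t2 b b' W m)"
  "bVr LP Att (TRef t) v v' W m =
     (\<exists>l l'. v = Loc l \<and> v' = Loc l' \<and> th1 W l = Some t \<and> th2 W l' = Some t \<and> (l, l') \<in> wbeta W)"
  by (simp_all add: bVr_def bV_eq_bV_lty)

lemma bVr_TFun:
  "bVr LP Att (TFun t1 L pc t2) v v' W m =
     (\<exists>x1 b1 x2 b2. v = Lam x1 b1 \<and> v' = Lam x2 b2 \<and>
        (\<forall>W' m' u1 u2 L1 L2. world_ext W W' \<longrightarrow> m' < m \<longrightarrow> bV LP Att t1 u1 u2 W' m' \<longrightarrow>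
            L \<subseteq> L1 \<longrightarrow> L \<subseteq> L2 \<longrightarrow> bE LP Att t2 (subst x1 u1 b1) (subst x2 u2 b2) W' L1 L2 m') \<and>
        uVr LP (TFun t1 L pc t2) v (th1 W) m \<and> uVr LP (TFun t1 L pc t2) v' (th2 W) m)"
  by (auto simp: bVr_def bV_def bE_def)

definition steps_par ::
  "('l \<Rightarrow> ('a, 'l) policy) \<Rightarrow> ('a, 'l) attacker \<Rightarrow> ('a, 'l) bVrel \<Rightarrow>
   (('a, 'l) world \<Rightarrow> ('a, 'l) exp \<Rightarrow> ('a, 'l) exp \<Rightarrow> bool) \<Rightarrow> ('a, 'l) world \<Rightarrow>
   'l set \<Rightarrow> ('a, 'l) state \<Rightarrow> ('a, 'l) exp \<Rightarrow> 'l set \<Rightarrow> ('a, 'l) state \<Rightarrow> ('a, 'l) exp \<Rightarrow> bool" where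
  "steps_par LP Att V C W L1 S1 e1 L2 S2 e2 \<longleftrightarrow> \<not> is_val e1 \<and> \<not> is_val e2 \<and>
     (\<forall>e1' S1' w L1' e2' S2' w' L2'.
        step e1 L1 S1 e1' S1' w L1' \<longrightarrow> step e2 L2 S2 e2' S2' w' L2' \<longrightarrow>
        (obs_irr LP Att V W w w' \<or> L1' \<subseteq> snd Att \<or> L2' \<subseteq> snd Att) \<longrightarrow>
        (\<exists>W'. world_ext W W' \<and> bsat V S1' S2' W' \<and> obs_eq LP Att V W' w w' \<and> C W' e1' e2'))"

definition steps_left ::
  "('l \<Rightarrow> ('a, 'l) policy) \<Rightarrow> ('a, 'l) attacker \<Rightarrow> ('a, 'l) bVrel \<Rightarrow>
   (('a, 'l) world \<Rightarrow> ('a, 'l) exp \<Rightarrow> ('a, 'l) exp \<Rightarrow> bool) \<Rightarrow> ('a, 'l) world \<Rightarrow>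
   'l set \<Rightarrow> ('a, 'l) state \<Rightarrow> ('a, 'l) exp \<Rightarrow> ('a, 'l) state \<Rightarrow> ('a, 'l) exp \<Rightarrow> bool" where
  "steps_left LP Att V C W L1 S1 e1 S2 e2 \<longleftrightarrow> \<not> is_val e1 \<and>
     (\<forall>e1' S1' w L1'. step e1 L1 S1 e1' S1' w L1' \<longrightarrow>
        \<not> flowsA_o LP Att w \<and> (\<exists>W'. world_ext W W' \<and> bsat V S1' S2 W' \<and> C W' e1' e2))"

definition steps_right ::
  "('l \<Rightarrow> ('a, 'l) policy) \<Rightarrow> ('a, 'l) attacker \<Rightarrow> ('a, 'l) bVrel \<Rightarrow>
   (('a, 'l) world \<Rightarrow> ('a, 'l) exp \<Rightarrow> ('a, 'l) exp \<Rightarrow> bool) \<Rightarrow> ('a, 'l) world \<Rightarrow>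
   ('a, 'l) state \<Rightarrow> ('a, 'l) exp \<Rightarrow> 'l set \<Rightarrow> ('a, 'l) state \<Rightarrow> ('a, 'l) exp \<Rightarrow> bool" where
  "steps_right LP Att V C W S1 e1 L2 S2 e2 \<longleftrightarrow> \<not> is_val e2 \<and>
     (\<forall>e2' S2' w L2'. step e2 L2 S2 e2' S2' w L2' \<longrightarrow>
        \<not> flowsA_o LP Att w \<and> (\<exists>W'. world_ext W W' \<and> bsat V S1 S2' W' \<and> C W' e1 e2'))"

definition steps_related ::
  "('l \<Rightarrow> ('a, 'l) policy) \<Rightarrow> ('a, 'l) attacker \<Rightarrow> ('a, 'l) bVrel \<Rightarrow>
   (('a, 'l) world \<Rightarrow> ('a, 'l) exp \<Rightarrow> ('a, 'l) exp \<Rightarrow> bool) \<Rightarrow> ('a, 'l) world \<Rightarrow>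
   'l set \<Rightarrow> ('a, 'l) state \<Rightarrow> ('a, 'l) exp \<Rightarrow> 'l set \<Rightarrow> ('a, 'l) state \<Rightarrow> ('a, 'l) exp \<Rightarrow> bool" where
  "steps_related LP Att V C W L1 S1 e1 L2 S2 e2 \<longleftrightarrow>
     steps_par LP Att V C W L1 S1 e1 L2 S2 e2 \<or> steps_left LP Att V C W L1 S1 e1 S2 e2 \<or>
     steps_right LP Att V C W S1 e1 L2 S2 e2"

lemma bE_iff:
  "bE LP Att t e1 e2 W L L' m \<longleftrightarrow> bV LP Att t e1 e2 W m \<or>
     (lockeq LP Att L L' \<and>
      (\<forall>L1 L2 W' m' S1 S2. L \<subseteq> L1 \<longrightarrow> L' \<subseteq> L2 \<longrightarrow> lockeq LP Att L1 L2 \<longrightarrow>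
         world_ext W W' \<longrightarrow> m' < m \<longrightarrow> wf_state S1 \<longrightarrow> wf_state S2 \<longrightarrow>
         bsat (bV_at LP Att m') S1 S2 W' \<longrightarrow>
         steps_related LP Att (bV_at LP Att m') (\<lambda>W'' a b. bE LP Att t a b W'' L L' m')
           W' L1 S1 e1 L2 S2 e2))"
  unfolding bE_def steps_related_def steps_par_def steps_left_def steps_right_def
  by (subst bLev.simps) (simp add: bStep_def Let_def bV_eq_bV_lty[symmetric] bV_def bE_def cong: imp_cong)

lemma bE_cases:
  assumes "bE LP Att t e1 e2 W L L' m"
  obtains "bV LP Att t e1 e2 W m"
  | "lockeq LP Att L L'"
    "\<And>L1 L2 W' m' S1 S2. L \<subseteq> L1 \<Longrightarrow> L' \<subseteq> L2 \<Longrightarrow> lockeq LP Att L1 L2 \<Longrightarrow>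
       world_ext W W' \<Longrightarrow> m' < m \<Longrightarrow> wf_state S1 \<Longrightarrow> wf_state S2 \<Longrightarrow>
       bsat (bV_at LP Att m') S1 S2 W' \<Longrightarrow>
       steps_related LP Att (bV_at LP Att m') (\<lambda>W'' a b. bE LP Att t a b W'' L L' m')
         W' L1 S1 e1 L2 S2 e2"
  using assms[THEN bE_iff[THEN iffD1]] that by blast

lemma bE_stepsI:
  assumes "lockeq LP Att L L'"
    and "\<And>L1 L2 W' m' S1 S2. L \<subseteq> L1 \<Longrightarrow> L' \<subseteq> L2 \<Longrightarrow> lockeq LP Att L1 L2 \<Longrightarrow>
       world_ext W W' \<Longrightarrow> m' < m \<Longrightarrow> wf_state S1 \<Longrightarrow> wf_state S2 \<Longrightarrow>
       bsat (bV_at LP Att m') S1 S2 W' \<Longrightarrow>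
       steps_related LP Att (bV_at LP Att m') (\<lambda>W'' a b. bE LP Att t a b W'' L L' m')
         W' L1 S1 e1 L2 S2 e2"
  shows "bE LP Att t e1 e2 W L L' m"
  by (subst bE_iff) (intro disjI2 conjI allI impI assms(1), rule assms(2))

lemma bE_if_bV: "bV LP Att t v v' W m \<Longrightarrow> bE LP Att t v v' W L L' m"
  by (subst bE_iff) (rule disjI1)

definition eval_context :: "(('a, 'l) exp \<Rightarrow> ('a, 'l) exp) \<Rightarrow> bool" where
  "eval_context K \<longleftrightarrow> (\<forall>e. is_val (K e) \<longrightarrow> is_val e) \<and>
     (\<forall>e L S e' S' w L'. step (K e) L S e' S' w L' \<longrightarrow> \<not> is_val e \<longrightarrow>
        (\<exists>e''. step e L S e'' S' w L' \<and> e' = K e''))"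

lemma eval_contextD:
  assumes "eval_context K"
  shows "\<not> is_val e \<Longrightarrow> \<not> is_val (K e)"
    and "step (K e) L S e' S' w L' \<Longrightarrow> \<not> is_val e \<Longrightarrow> \<exists>e''. step e L S e'' S' w L' \<and> e' = K e''"
  using assms unfolding eval_context_def by blast+

lemma steps_par_map:
  assumes par: "steps_par LP Att V C W L1 S1 e1 L2 S2 e2" and K: "eval_context K"
    and cont: "\<And>W a b. C W a b \<Longrightarrow> C' W (K a) (K b)"
  shows "steps_par LP Att V C' W L1 S1 (K e1) L2 S2 (K e2)"
  unfolding steps_par_def
proof (intro conjI allI impI)
  have nv: "\<not> is_val e1" "\<not> is_val e2" using par unfolding steps_par_def by blast+
  then show "\<not> is_val (K e1)" "\<not> is_val (K e2)" using eval_contextD(1)[OF K] by blast+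
  fix e1' S1' w L1' e2' S2' w' L2'
  assume st: "step (K e1) L1 S1 e1' S1' w L1'" "step (K e2) L2 S2 e2' S2' w' L2'"
    and irr: "obs_irr LP Att V W w w' \<or> L1' \<subseteq> snd Att \<or> L2' \<subseteq> snd Att"
  obtain a1 where a1: "step e1 L1 S1 a1 S1' w L1'" "e1' = K a1"
    using eval_contextD(2)[OF K st(1) nv(1)] by blast
  obtain a2 where a2: "step e2 L2 S2 a2 S2' w' L2'" "e2' = K a2"
    using eval_contextD(2)[OF K st(2) nv(2)] by blast
  show "\<exists>W'. world_ext W W' \<and> bsat V S1' S2' W' \<and> obs_eq LP Att V W' w w' \<and> C' W' e1' e2'"
    using par[unfolded steps_par_def, THEN conjunct2, THEN conjunct2, rule_format, OF a1(1) a2(1) irr]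
      cont a1(2) a2(2) by blast
qed

lemma steps_left_map:
  assumes left: "steps_left LP Att V C W L1 S1 e1 S2 e2" and K: "eval_context K"
    and cont: "\<And>W a b. C W a b \<Longrightarrow> C' W (K a) (K b)"
  shows "steps_left LP Att V C' W L1 S1 (K e1) S2 (K e2)"
  unfolding steps_left_def
proof (intro conjI allI impI)
  have nv: "\<not> is_val e1" using left unfolding steps_left_def by blast
  then show "\<not> is_val (K e1)" using eval_contextD(1)[OF K] by blast
  fix e1' S1' w L1' assume "step (K e1) L1 S1 e1' S1' w L1'"
  then obtain a1 where "step e1 L1 S1 a1 S1' w L1'" "e1' = K a1"
    using eval_contextD(2)[OF K _ nv] by blast
  then show "\<not> flowsA_o LP Att w" "\<exists>W'. world_ext W W' \<and> bsat V S1' S2 W' \<and> C' W' e1' (K e2)"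
    using left cont unfolding steps_left_def by blast+
qed

lemma steps_right_map:
  assumes right: "steps_right LP Att V C W S1 e1 L2 S2 e2" and K: "eval_context K"
    and cont: "\<And>W a b. C W a b \<Longrightarrow> C' W (K a) (K b)"
  shows "steps_right LP Att V C' W S1 (K e1) L2 S2 (K e2)"
  unfolding steps_right_def
proof (intro conjI allI impI)
  have nv: "\<not> is_val e2" using right unfolding steps_right_def by blast
  then show "\<not> is_val (K e2)" using eval_contextD(1)[OF K] by blast
  fix e2' S2' w L2' assume "step (K e2) L2 S2 e2' S2' w L2'"
  then obtain a2 where "step e2 L2 S2 a2 S2' w L2'" "e2' = K a2"
    using eval_contextD(2)[OF K _ nv] by blast
  then show "\<not> flowsA_o LP Att w" "\<exists>W'. world_ext W W' \<and> bsat V S1 S2' W' \<and> C' W' (K e1) e2'"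
    using right cont unfolding steps_right_def by blast+
qed

lemma steps_related_map:
  assumes "steps_related LP Att V C W L1 S1 e1 L2 S2 e2" and K: "eval_context K"
    and cont: "\<And>W a b. C W a b \<Longrightarrow> C' W (K a) (K b)"
  shows "steps_related LP Att V C' W L1 S1 (K e1) L2 S2 (K e2)"
  using assms(1)[unfolded steps_related_def]
proof (elim disjE)
  assume "steps_par LP Att V C W L1 S1 e1 L2 S2 e2"
  then have "steps_par LP Att V C' W L1 S1 (K e1) L2 S2 (K e2)" using K by (rule steps_par_map) (erule cont)
  then show ?thesis unfolding steps_related_def by blast
next
  assume "steps_left LP Att V C W L1 S1 e1 S2 e2"
  then have "steps_left LP Att V C' W L1 S1 (K e1) S2 (K e2)" using K by (rule steps_left_map) (erule cont)
  then show ?thesis unfolding steps_related_def by blast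
next
  assume "steps_right LP Att V C W S1 e1 L2 S2 e2"
  then have "steps_right LP Att V C' W S1 (K e1) L2 S2 (K e2)" using K by (rule steps_right_map) (erule cont)
  then show ?thesis unfolding steps_related_def by blast
qed

lemma bE_context:
  assumes K: "eval_context K"
    and on_values: "\<And>W k v v'. k \<le> m \<Longrightarrow> bV LP Att t v v' W k \<Longrightarrow> bE LP Att t2 (K v) (K v') W L L' k"
    and "bE LP Att t e e' W L L' m"
  shows "bE LP Att t2 (K e) (K e') W L L' m"
  using assms(3) on_values
proof (induction m arbitrary: W e e' rule: less_induct)
  case (less m)
  from less.prems(1) show ?case
  proof (cases rule: bE_cases)
    case 1
    then show ?thesis using less.prems(2) by blast
  next
    case 2
    show ?thesis
    proof (rule bE_stepsI)
      show "lockeq LP Att L L'" by fact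
      fix L1 L2 W' m' S1 S2
      assume "L \<subseteq> L1" "L' \<subseteq> L2" "lockeq LP Att L1 L2" "world_ext W W'" "m' < m"
        "wf_state S1" "wf_state S2" "bsat (bV_at LP Att m') S1 S2 W'"
      with 2 have rel: "steps_related LP Att (bV_at LP Att m') (\<lambda>W'' a b. bE LP Att t a b W'' L L' m')
                     W' L1 S1 e L2 S2 e'" by blast
      have cont: "bE LP Att t2 (K a) (K b) W'' L L' m'" if "bE LP Att t a b W'' L L' m'" for W'' a b
      proof (rule less.IH[OF \<open>m' < m\<close> that])
        fix W k v v' assume "k \<le> m'" "bV LP Att t v v' W k"
        then show "bE LP Att t2 (K v) (K v') W L L' k" using less.prems(2) \<open>m' < m\<close> by simp
      qed
      show "steps_related LP Att (bV_at LP Att m') (\<lambda>W'' a b. bE LP Att t2 a b W'' L L' m')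
                         W' L1 S1 (K e) L2 S2 (K e')"
        by (rule steps_related_map[OF rel K]) (erule cont)
    qed
  qed
qed

lemma eval_context_id: "eval_context (\<lambda>e. e)"
  unfolding eval_context_def by blast

lemma bE_type_mono:
  assumes "\<And>W k v v'. k \<le> m \<Longrightarrow> bV LP Att t v v' W k \<Longrightarrow> bV LP Att t2 v v' W k"
    and "bE LP Att t e e' W L L' m"
  shows "bE LP Att t2 e e' W L L' m"
  by (rule bE_context[OF eval_context_id _ assms(2)]) (blast intro: bE_if_bV assms(1))

lemma flows_trans: "flows p q \<Longrightarrow> flows q r \<Longrightarrow> flows p r"
  unfolding flows_def by (meson order_trans)

lemma flowsA_if_flows: "flows p q \<Longrightarrow> flowsA Att q \<Longrightarrow> flowsA Att p"
  unfolding flowsA_def by (rule flows_trans)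

lemma flowsA_pspec: "flowsA Att (pspec p L) \<Longrightarrow> L \<subseteq> snd Att \<Longrightarrow> flowsA Att p"
  unfolding flowsA_def flows_def pspec_def by fastforce

lemma flowsA_pbot: "flowsA Att pbot"
  unfolding flowsA_def flows_def pbot_def by auto

lemma senv_ext_trans: "senv_ext th th' \<Longrightarrow> senv_ext th' th'' \<Longrightarrow> senv_ext th th''"
  unfolding senv_ext_def using map_le_trans by blast

lemma world_ext_trans: "world_ext W W' \<Longrightarrow> world_ext W' W'' \<Longrightarrow> world_ext W W''"
  unfolding world_ext_def using map_le_trans by blast

lemma world_ext_senv_ext:
  assumes "world_ext W W'"
  shows "senv_ext (th1 W) (th1 W')" and "senv_ext (th2 W) (th2 W')"
  using assms unfolding world_ext_def senv_ext_def is_world_def by blast+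

lemma map_le_SomeD: "m \<subseteq>\<^sub>m m' \<Longrightarrow> m x = Some y \<Longrightarrow> m' x = Some y"
  by (metis domI map_le_def)

lemma uVr_uV_mono:
  "uVr LP A v th m \<Longrightarrow> senv_ext th th' \<Longrightarrow> k \<le> m \<Longrightarrow> uVr LP A v th' k"
  "uV LP t v th m \<Longrightarrow> senv_ext th th' \<Longrightarrow> k \<le> m \<Longrightarrow> uV LP t v th' k"
proof (induction A and t arbitrary: v and v)
  case (TRef t)
  then show ?case by (auto simp: uVr_simps senv_ext_def intro: map_le_SomeD)
next
  case (TFun t1 L pc t2)
  from TFun.prems(1) obtain x e where v: "v = Lam x e" and body:
    "\<forall>th'' m' u. senv_ext th th'' \<longrightarrow> m' < m \<longrightarrow> uV LP t1 u th'' m' \<longrightarrow> uE LP pc t2 (subst x u e) th'' m'"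
    unfolding uVr_TFun by blast
  have "uE LP pc t2 (subst x u e) th'' m'"
    if "senv_ext th' th''" "m' < k" "uV LP t1 u th'' m'" for th'' m' u
    using body senv_ext_trans[OF TFun.prems(2) that(1)] that(2,3) TFun.prems(3) by simp
  then show ?case unfolding uVr_TFun using v by blast
qed (auto simp: uVr_simps uV_Lab)

lemmas uVr_mono = uVr_uV_mono(1)

lemma bVr_bV_imp_unary:
  "bVr LP Att A v v' W m \<Longrightarrow> uVr LP A v (th1 W) m \<and> uVr LP A v' (th2 W) m"
  "bV LP Att t v v' W m \<Longrightarrow> uV LP t v (th1 W) m \<and> uV LP t v' (th2 W) m"
proof (induction A and t arbitrary: v v' and v v')
  case (TFun t1 L pc t2)
  then show ?case unfolding bVr_TFun by blast
next
  case (Lab A p)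
  then show ?case by (auto simp: bV_Lab uV_Lab split: if_splits)
qed (auto simp: uVr_simps bVr_simps)

lemma bVr_bV_mono:
  "bVr LP Att A v v' W m \<Longrightarrow> world_ext W W' \<Longrightarrow> k \<le> m \<Longrightarrow> bVr LP Att A v v' W' k"
  "bV LP Att t v v' W m \<Longrightarrow> world_ext W W' \<Longrightarrow> k \<le> m \<Longrightarrow> bV LP Att t v v' W' k"
proof (induction A and t arbitrary: v v' and v v')
  case (TRef t)
  then show ?case by (auto simp: bVr_simps world_ext_def intro: map_le_SomeD)
next
  case (TFun t1 L pc t2)
  have unary: "uVr LP (TFun t1 L pc t2) v (th1 W') k" "uVr LP (TFun t1 L pc t2) v' (th2 W') k"
    using TFun.prems uVr_mono world_ext_senv_ext unfolding bVr_TFun by blast+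
  from TFun.prems(1) obtain x1 b1 x2 b2 where v: "v = Lam x1 b1" "v' = Lam x2 b2" and body:
    "\<forall>W'' m' u1 u2 L1 L2. world_ext W W'' \<longrightarrow> m' < m \<longrightarrow> bV LP Att t1 u1 u2 W'' m' \<longrightarrow>
       L \<subseteq> L1 \<longrightarrow> L \<subseteq> L2 \<longrightarrow> bE LP Att t2 (subst x1 u1 b1) (subst x2 u2 b2) W'' L1 L2 m'"
    unfolding bVr_TFun by blast
  have "bE LP Att t2 (subst x1 u1 b1) (subst x2 u2 b2) W'' L1 L2 m'"
    if "world_ext W' W''" "m' < k" "bV LP Att t1 u1 u2 W'' m'" "L \<subseteq> L1" "L \<subseteq> L2"
    for W'' m' u1 u2 L1 L2
    using body[rule_format, OF world_ext_trans[OF TFun.prems(2) that(1)] _ that(3-5)] that(2) TFun.prems(3)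
    by simp
  then show ?case unfolding bVr_TFun using v unary by blast
next
  case (Lab A p)
  show ?case
  proof (cases "flowsA Att p")
    case True
    then show ?thesis using Lab by (simp add: bV_Lab)
  next
    case False
    with Lab.prems(1) show ?thesis
      using uVr_mono[OF _ world_ext_senv_ext(1)[OF Lab.prems(2)] Lab.prems(3)]
        uVr_mono[OF _ world_ext_senv_ext(2)[OF Lab.prems(2)] Lab.prems(3)]
      by (simp add: bV_Lab)
  qed
qed (auto simp: bVr_simps)

lemmas bV_mono = bVr_bV_mono(2)

lemma unary_subtyping:
  "(\<forall>A1 A2 v th. sub_raw A1 A2 \<longrightarrow> uVr LP A1 v th m \<longrightarrow> uVr LP A2 v th m) \<and>
   (\<forall>t1 t2 v th. sub_lty t1 t2 \<longrightarrow> uV LP t1 v th m \<longrightarrow> uV LP t2 v th m) \<and>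
   (\<forall>pc pc' t t2 e th. flows pc' pc \<longrightarrow> sub_lty t t2 \<longrightarrow> uE LP pc t e th m \<longrightarrow> uE LP pc' t2 e th m)"
proof (induction m rule: less_induct)
  case (less m)
  have V: "sub_lty t1 t2 \<Longrightarrow> uV LP t1 v th m \<Longrightarrow> uV LP t2 v th m"
    "sub_raw A1 A2 \<Longrightarrow> uVr LP A1 v th m \<Longrightarrow> uVr LP A2 v th m" for t1 t2 A1 A2 v th
  proof (induction arbitrary: v and v rule: sub_lty_sub_raw.inducts)
    case (sub_fun t0 t1 t2 t3 p' p L L')
    from sub_fun.prems obtain x e where v: "v = Lam x e" and body:
      "\<forall>th' m' u. senv_ext th th' \<longrightarrow> m' < m \<longrightarrow> uV LP t1 u th' m' \<longrightarrow> uE LP p t2 (subst x u e) th' m'"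
      unfolding uVr_TFun by blast
    have "uE LP p' t3 (subst x u e) th' m'" if "senv_ext th th'" "m' < m" "uV LP t0 u th' m'" for th' m' u
    proof -
      have "uV LP t1 u th' m'" using less.IH[OF that(2)] \<open>sub_lty t0 t1\<close> that(3) by blast
      then have "uE LP p t2 (subst x u e) th' m'" using body that(1,2) by blast
      then show ?thesis using less.IH[OF that(2)] \<open>sub_lty t2 t3\<close> \<open>flows p' p\<close> by blast
    qed
    then show ?case unfolding uVr_TFun using v by blast
  qed (auto simp: uV_Lab uVr_simps)
  have E: "uE LP pc' t2 e th m" if "flows pc' pc" "sub_lty t t2" "uE LP pc t e th m" for pc pc' t t2 e th
  proof -
    have later: "uE LP pc' t2 e' th' m'" if "m' < m" "uE LP pc t e' th' m'" for e' th' m'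
      using less.IH[OF that(1)] \<open>flows pc' pc\<close> \<open>sub_lty t t2\<close> that(2) by blast
    have obs: "flows pc' p" if "flows pc p" for p
      using flows_trans \<open>flows pc' pc\<close> that by blast
    show ?thesis
      using \<open>uE LP pc t e th m\<close>[THEN uE_iff[THEN iffD1]] V(1)[OF \<open>sub_lty t t2\<close>] later obs
      by (subst uE_iff) blast
  qed
  show ?case using V E by blast
qed

lemma uVr_subtype: "sub_raw A1 A2 \<Longrightarrow> uVr LP A1 v th m \<Longrightarrow> uVr LP A2 v th m"
  using unary_subtyping by blast

lemma bV_Lab_weaken:
  assumes v: "bV LP Att (Lab A p) v v' W m" and "sub_raw A B"
    and low: "flowsA Att q \<Longrightarrow> flowsA Att p"
    and raw: "bVr LP Att A v v' W m \<Longrightarrow> bVr LP Att B v v' W m"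
  shows "bV LP Att (Lab B q) v v' W m"
proof (cases "flowsA Att q")
  case True
  then show ?thesis using v low raw by (simp add: bV_Lab)
next
  case False
  have "uVr LP A v (th1 W) m \<and> uVr LP A v' (th2 W) m"
    using v bVr_bV_imp_unary(1)[of LP Att A v v' W m] by (simp add: bV_Lab split: if_splits)
  then show ?thesis using False \<open>sub_raw A B\<close> uVr_subtype by (simp add: bV_Lab) blast
qed

lemma binary_subtyping:
  "(\<forall>A1 A2 v v' W. sub_raw A1 A2 \<longrightarrow> bVr LP Att A1 v v' W m \<longrightarrow> bVr LP Att A2 v v' W m) \<and>
   (\<forall>t1 t2 v v' W. sub_lty t1 t2 \<longrightarrow> bV LP Att t1 v v' W m \<longrightarrow> bV LP Att t2 v v' W m)"
proof (induction m rule: less_induct)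
  case (less m)
  have "sub_lty t1 t2 \<Longrightarrow> bV LP Att t1 v v' W m \<Longrightarrow> bV LP Att t2 v v' W m"
    "sub_raw A1 A2 \<Longrightarrow> bVr LP Att A1 v v' W m \<Longrightarrow> bVr LP Att A2 v v' W m" for t1 t2 A1 A2 v v' W
  proof (induction arbitrary: v v' and v v' rule: sub_lty_sub_raw.inducts)
    case (sub_lab p p' A B)
    then show ?case using bV_Lab_weaken flowsA_if_flows by blast
  next
    case (sub_fun t0 t1 t2 t3 p' p L L')
    from sub_fun.prems obtain x1 b1 x2 b2 where v: "v = Lam x1 b1" "v' = Lam x2 b2" and body:
      "\<forall>W' m' u1 u2 L1 L2. world_ext W W' \<longrightarrow> m' < m \<longrightarrow> bV LP Att t1 u1 u2 W' m' \<longrightarrow>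
         L \<subseteq> L1 \<longrightarrow> L \<subseteq> L2 \<longrightarrow> bE LP Att t2 (subst x1 u1 b1) (subst x2 u2 b2) W' L1 L2 m'"
      and unary: "uVr LP (TFun t1 L p t2) v (th1 W) m" "uVr LP (TFun t1 L p t2) v' (th2 W) m"
      unfolding bVr_TFun by blast
    have "sub_raw (TFun t1 L p t2) (TFun t0 L' p' t3)"
      using sub_fun.hyps by (blast intro: sub_lty_sub_raw.sub_fun)
    then have unary': "uVr LP (TFun t0 L' p' t3) v (th1 W) m" "uVr LP (TFun t0 L' p' t3) v' (th2 W) m"
      using unary uVr_subtype by blast+
    have "bE LP Att t3 (subst x1 u1 b1) (subst x2 u2 b2) W' L1 L2 m'"
      if "world_ext W W'" "m' < m" "bV LP Att t0 u1 u2 W' m'" "L' \<subseteq> L1" "L' \<subseteq> L2"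
      for W' m' u1 u2 L1 L2
    proof (rule bE_type_mono)
      show "bE LP Att t2 (subst x1 u1 b1) (subst x2 u2 b2) W' L1 L2 m'"
        using body less.IH[OF that(2)] \<open>sub_lty t0 t1\<close> \<open>L \<subseteq> L'\<close> that by blast
      show "bV LP Att t3 w w' W'' k" if "k \<le> m'" "bV LP Att t2 w w' W'' k" for W'' k w w'
        using less.IH[of k, THEN conjunct2, rule_format, OF _ \<open>sub_lty t2 t3\<close> that(2)] that(1) \<open>m' < m\<close>
        by simp
    qed
    then show ?case unfolding bVr_TFun using v unary' by blast
  qed (auto simp: bVr_simps)
  then show ?case by blast
qed

lemma bVr_subtype: "sub_raw A1 A2 \<Longrightarrow> bVr LP Att A1 v v' W m \<Longrightarrow> bVr LP Att A2 v v' W m"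
  using binary_subtyping by blast

lemma uVr_uV_is_val:
  "uVr LP A v th m \<Longrightarrow> is_val v"
  "uV LP t v th m \<Longrightarrow> is_val v"
proof (induction A and t arbitrary: v and v)
  case (TFun t1 L pc t2)
  then show ?case by (auto simp: uVr_TFun)
qed (auto simp: uVr_simps uV_Lab)

lemma bV_is_val: "bV LP Att t v v' W m \<Longrightarrow> is_val v \<and> is_val v'"
  using bVr_bV_imp_unary(2) uVr_uV_is_val(2) by blast

lemma bV_restr_subtype:
  assumes v: "bV LP Att t' v v' W m" and sub: "sub_lty (restr t' L) t"
    and low: "flowsA Att (lab t) \<Longrightarrow> L \<subseteq> snd Att"
  shows "bV LP Att t v v' W m"
proof -
  obtain A' p' where t': "t' = Lab A' p'" by (cases t')
  from sub obtain B q where t: "t = Lab B q" and "flows (pspec p' L) q" and "sub_raw A' B"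
    unfolding t' by (cases rule: sub_lty.cases) auto
  have "flowsA Att q \<Longrightarrow> flowsA Att p'"
    using flowsA_pspec flowsA_if_flows \<open>flows (pspec p' L) q\<close> low t by fastforce
  then show ?thesis using bV_Lab_weaken v \<open>sub_raw A' B\<close> bVr_subtype unfolding t t' by blast
qed

lemma step_not_val: "step e L S e' S' w L' \<Longrightarrow> \<not> is_val e"
  by (induction rule: step.induct) auto

lemma eval_context_New: "eval_context (\<lambda>e. New e t)"
  unfolding eval_context_def by (auto elim: step.cases)

lemma step_New_value:
  "step (New v t) L S e1 S' w L' \<Longrightarrow> is_val v \<Longrightarrow>
     \<exists>l. l \<notin> dom S \<and> e1 = Loc l \<and> S' = S(l \<mapsto> (v, t)) \<and> w = Wr l t v \<and> L' = L"
  by (erule step.cases) (auto dest: step_not_val)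

lemma bsat_alloc:
  assumes sat: "bsat (bV_at LP Att k) S1 S2 W" and "is_world W"
    and fresh: "l \<notin> dom S1" "l' \<notin> dom S2" and v: "bV LP Att t v v' W k"
  defines "W' \<equiv> ((th1 W)(l \<mapsto> t), (th2 W)(l' \<mapsto> t), insert (l, l') (wbeta W))"
  shows "world_ext W W'" and "bsat (bV_at LP Att k) (S1(l \<mapsto> (v, t))) (S2(l' \<mapsto> (v', t))) W'"
proof -
  have fresh_W: "l \<notin> dom (th1 W)" "l' \<notin> dom (th2 W)" using sat fresh unfolding bsat_def by blast+
  then show ext: "world_ext W W'"
    using \<open>is_world W\<close> unfolding world_ext_def is_world_def W'_def th1_def th2_def wbeta_def
    by (auto simp: map_le_def)
  have W': "th1 W' = (th1 W)(l \<mapsto> t)" "th2 W' = (th2 W)(l' \<mapsto> t)" "wbeta W' = insert (l, l') (wbeta W)"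
    by (simp_all add: W'_def th1_def th2_def wbeta_def)
  have related: "th1 W' l1 = th2 W' l2 \<and>
      bV LP Att (the (th1 W' l1)) (fst (the ((S1(l \<mapsto> (v, t))) l1))) (fst (the ((S2(l' \<mapsto> (v', t))) l2))) W' k"
    if "(l1, l2) \<in> wbeta W'" for l1 l2
  proof (cases "(l1, l2) = (l, l')")
    case True
    then show ?thesis using bV_mono[OF v ext] by (simp add: W')
  next
    case False
    then have "(l1, l2) \<in> wbeta W" using that by (auto simp: W')
    then have "l1 \<noteq> l" "l2 \<noteq> l'" "th1 W l1 = th2 W l2"
      and "bV LP Att (the (th1 W l1)) (fst (the (S1 l1))) (fst (the (S2 l2))) W k"
      using sat fresh_W unfolding bsat_def by blast+
    then show ?thesis using bV_mono[OF _ ext] by (simp add: W')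
  qed
  show "bsat (bV_at LP Att k) (S1(l \<mapsto> (v, t))) (S2(l' \<mapsto> (v', t))) W'"
    unfolding bsat_def
  proof (intro conjI)
    show "\<forall>l1 l2. (l1, l2) \<in> wbeta W' \<longrightarrow> th1 W' l1 = th2 W' l2 \<and>
        bV LP Att (the (th1 W' l1)) (fst (the ((S1(l \<mapsto> (v, t))) l1))) (fst (the ((S2(l' \<mapsto> (v', t))) l2))) W' k"
      using related by blast
  qed (use sat in \<open>auto simp: bsat_def W'\<close>)
qed

lemma bV_write_relevant:
  assumes v: "bV LP Att t' v v' W m" and sub: "sub_lty (restr t' L) t" "sub_lty (restr t' L') t"
    and "obs_irr LP Att (bV_at LP Att m) W (Wr l t v) (Wr l' t v') \<or> L \<subseteq> snd Att \<or> L' \<subseteq> snd Att"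
  shows "bV LP Att t v v' W m"
  using assms(4)
proof (elim disjE)
  assume "obs_irr LP Att (bV_at LP Att m) W (Wr l t v) (Wr l' t v')"
  then have "\<not> flowsA Att (lab t) \<or> bV LP Att t v v' W m"
    unfolding obs_irr_def flowsA_o_def by auto
  then show ?thesis using bV_restr_subtype[OF v sub(1)] by blast
qed (use bV_restr_subtype[OF v sub(1)] bV_restr_subtype[OF v sub(2)] in blast)+

lemma bE_New_values:
  assumes lock: "lockeq LP Att L L'" and sub: "sub_lty (restr t' L) t" "sub_lty (restr t' L') t"
    and v: "bV LP Att t' v v' W m"
  shows "bE LP Att (Lab (TRef t) pbot) (New v t) (New v' t) W L L' m"
proof (rule bE_stepsI[OF lock])
  fix L1 L2 W' m' S1 S2
  assume "L \<subseteq> L1" "L' \<subseteq> L2" "lockeq LP Att L1 L2" "world_ext W W'" "m' < m"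
    "wf_state S1" "wf_state S2" and sat: "bsat (bV_at LP Att m') S1 S2 W'"
  have vals: "is_val v" "is_val v'" using bV_is_val[OF v] by auto
  have v_W': "bV LP Att t' v v' W' m'" using bV_mono[OF v \<open>world_ext W W'\<close>] \<open>m' < m\<close> by simp
  have "\<exists>W''. world_ext W' W'' \<and> bsat (bV_at LP Att m') S1' S2' W'' \<and>
          obs_eq LP Att (bV_at LP Att m') W'' w w' \<and> bE LP Att (Lab (TRef t) pbot) e1' e2' W'' L L' m'"
    if st1: "step (New v t) L1 S1 e1' S1' w L1'" and st2: "step (New v' t) L2 S2 e2' S2' w' L2'"
      and cond: "obs_irr LP Att (bV_at LP Att m') W' w w' \<or> L1' \<subseteq> snd Att \<or> L2' \<subseteq> snd Att"
    for e1' S1' w L1' e2' S2' w' L2'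
  proof -
    obtain l where l: "l \<notin> dom S1" "e1' = Loc l" "S1' = S1(l \<mapsto> (v, t))" "w = Wr l t v" "L1' = L1"
      using step_New_value[OF st1 vals(1)] by blast
    obtain l' where l': "l' \<notin> dom S2" "e2' = Loc l'" "S2' = S2(l' \<mapsto> (v', t))" "w' = Wr l' t v'" "L2' = L2"
      using step_New_value[OF st2 vals(2)] by blast
    have "obs_irr LP Att (bV_at LP Att m') W' (Wr l t v) (Wr l' t v') \<or> L \<subseteq> snd Att \<or> L' \<subseteq> snd Att"
      using cond l l' \<open>L \<subseteq> L1\<close> \<open>L' \<subseteq> L2\<close> by blast
    with v_W' sub have related: "bV LP Att t v v' W' m'" by (rule bV_write_relevant)
    define W'' where "W'' = ((th1 W')(l \<mapsto> t), (th2 W')(l' \<mapsto> t), insert (l, l') (wbeta W'))"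
    have "is_world W'" using \<open>world_ext W W'\<close> world_ext_def by blast
    note alloc = bsat_alloc[OF sat this l(1) l'(1) related, folded W''_def]
    have loc: "th1 W'' l = Some t" "th2 W'' l' = Some t" "(l, l') \<in> wbeta W''"
      by (simp_all add: W''_def th1_def th2_def wbeta_def)
    show ?thesis
    proof (intro exI conjI)
      show "world_ext W' W''" "bsat (bV_at LP Att m') S1' S2' W''" using alloc l l' by simp_all
      show "obs_eq LP Att (bV_at LP Att m') W'' w w'"
        using bV_mono[OF related alloc(1)] loc unfolding obs_eq_def l l' by auto
      show "bE LP Att (Lab (TRef t) pbot) e1' e2' W'' L L' m'"
        unfolding l l' by (rule bE_if_bV) (simp add: bV_Lab bVr_simps flowsA_pbot loc)
    qed
  qed
  then show "steps_related LP Att (bV_at LP Att m') (\<lambda>W'' a b. bE LP Att (Lab (TRef t) pbot) a b W'' L L' m')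
               W' L1 S1 (New v t) L2 S2 (New v' t)"
    unfolding steps_related_def steps_par_def by (intro disjI1) auto
qed

theorem mainTheorem5:
  fixes LP :: "'l \<Rightarrow> ('a, 'l) policy"
    and Att :: "('a, 'l) attacker"
    and W :: "('a, 'l) world"
    and m :: nat
    and L L' :: "'l set"
    and t t' :: "('a, 'l) lty"
    and e e' :: "('a, 'l) exp"
  assumes "is_world W"
    and "bE LP Att t' e e' W L L' m"
    and "lockeq LP Att L L'"
    and "sub_lty (restr t' L) t"
    and "sub_lty (restr t' L') t"
  shows "bE LP Att (Lab (TRef t) pbot) (New e t) (New e' t) W L L' m"
  by (rule bE_context[OF eval_context_New _ assms(2)]) (erule bE_New_values[OF assms(3-5)])

end
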